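(* Let $f:\mathbb{R}^n\times\mathbb{R}^p\to[-\infty,\infty]$ be a proper nearly convex function and let $\mathcal{P}_2(x,y)=y$. Suppose $0\in\operatorname{ri}\big(\mathcal{P}_2(\operatorname{dom} f)\big)$. Then $\mathcal{V}=\mathcal{V}_d$, where $\mathcal{V}=\inf\{f(x,0):x\in\mathbb{R}^n\}$ and $\mathcal{V}_d=\sup\{-f^*(0,y^* ):y^*\in\mathbb{R}^p\}$.
   Context: A set $\Omega$ is nearly convex if there is a convex set $C$ with $C\subset\Omega\subset\overline{C}$; $\operatorname{ri}\Omega=\{a\in\Omega:\exists\delta>0,\ B(a;\delta)\cap\operatorname{aff}\Omega\subset\Omega\}$. A function is nearly convex if its epigraph is nearly convex, proper if its domain $\{f<\infty\}$ is nonempty and $f>-\infty$. Fenchel conjugate $f^*(u,v)=\sup_{(x,y)}\{\langle u,x\rangle+\langle v,y\rangle-f(x,y)\}$. *)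

theory Defs
  imports "HOL-Analysis.Analysis" "HOL-Library.Extended_Real"
begin

definition nearly_convex :: "'a::real_normed_vector set \<Rightarrow> bool" where
  "nearly_convex S \<longleftrightarrow> (\<exists>C. convex C \<and> C \<subseteq> S \<and> S \<subseteq> closure C)"

definition ri :: "'a::real_normed_vector set \<Rightarrow> 'a set" where
  "ri S = {a \<in> S. \<exists>\<delta>>0. ball a \<delta> \<inter> affine hull S \<subseteq> S}"

definition epi :: "('a \<Rightarrow> ereal) \<Rightarrow> ('a \<times> real) set" where
  "epi f = {(x, t). f x \<le> ereal t}"

definition edom :: "('a \<Rightarrow> ereal) \<Rightarrow> 'a set" where
  "edom f = {x. f x < \<infinity>}"

definition proper_fun :: "('a \<Rightarrow> ereal) \<Rightarrow> bool" where
  "proper_fun f \<longleftrightarrow> edom f \<noteq> {} \<and> (\<forall>x. f x > -\<infinity>)"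

definition nearly_convex_fun :: "('a::real_normed_vector \<Rightarrow> ereal) \<Rightarrow> bool" where
  "nearly_convex_fun f \<longleftrightarrow> nearly_convex (epi f)"

definition fconj :: "((real^'n) \<times> (real^'p) \<Rightarrow> ereal) \<Rightarrow> (real^'n) \<times> (real^'p) \<Rightarrow> ereal" where
  "fconj f = (\<lambda>(u, v). SUP (x, y). ereal (inner u x + inner v y) - f (x, y))"

end

theory Submission
  imports Defs
begin

text \<open>The value function \<open>p y = inf\<^sub>x f (x, y)\<close> is again nearly convex, with effective domain
  \<open>\<P>\<^sub>2 (dom f)\<close>, and \<open>\<V> = p 0\<close>. If \<open>\<V>\<close> is finite, the point
  \<open>(0, \<V>)\<close> lies on the relative boundary of a convex set squeezed between the epigraph of \<open>p\<close>
  and its closure, so it admits a supporting hyperplane. Because \<open>0\<close> is relatively interior to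
  \<open>dom p\<close>, the hyperplane cannot be vertical; its slope \<open>y\<^sup>*\<close> is a subgradient of \<open>p\<close> at \<open>0\<close>,
  which says exactly \<open>f\<^sup>* (0, y\<^sup>*) \<le> -\<V>\<close>.\<close>

lemma ri_eq_rel_interior: "ri S = rel_interior S"
  by (auto simp: ri_def mem_rel_interior_ball)

lemma rel_interior_extend_beyond:
  fixes S :: "'a::real_normed_vector set"
  assumes "z \<in> rel_interior S" "x \<in> affine hull S"
  obtains e where "e > 0" "z + e *\<^sub>R (z - x) \<in> S"
proof -
  obtain d where d: "d > 0" "ball z d \<inter> affine hull S \<subseteq> S"
    using assms(1) by (auto simp: mem_rel_interior_ball)
  define e where "e = d / (norm (z - x) + 1)"
  have pos: "norm (z - x) + 1 > 0" by (simp add: add_nonneg_pos)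
  then have "e > 0" using d by (simp add: e_def)
  have "norm (e *\<^sub>R (z - x)) < d"
  proof -
    have "e * norm (z - x) < e * (norm (z - x) + 1)" using \<open>e > 0\<close> by simp
    also have "\<dots> = d" using pos by (simp add: e_def)
    finally show ?thesis using \<open>e > 0\<close> by simp
  qed
  then have "z + e *\<^sub>R (z - x) \<in> ball z d" by (simp add: dist_norm)
  moreover have "z \<in> affine hull S"
    using assms(1) rel_interior_subset by (blast intro: hull_inc)
  then have "(1 + e) *\<^sub>R z + (- e) *\<^sub>R x \<in> affine hull S"
    using assms(2) by (intro mem_affine[OF affine_affine_hull]) auto
  ultimately have "z + e *\<^sub>R (z - x) \<in> S"
    using d by (auto simp: algebra_simps)
  with \<open>e > 0\<close> show ?thesis by (rule that)
qed

lemma fconj_weak_duality: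
  fixes f :: "(real^'n) \<times> (real^'p) \<Rightarrow> ereal"
  shows "(SUP y. - fconj f (0, y)) \<le> (INF x. f (x, 0))"
proof (rule SUP_least, rule INF_greatest)
  fix y :: "real^'p" and x :: "real^'n"
  have "ereal (inner 0 x + inner y 0) - f (x, 0) \<le> fconj f (0, y)"
    unfolding fconj_def by (auto intro!: SUP_upper2[where i="(x,0)"])
  then show "- fconj f (0, y) \<le> f (x, 0)"
    by (simp add: zero_ereal_def[symmetric] ereal_uminus_le_reorder)
qed

lemma nearly_convex_funE_upclosed:
  assumes "nearly_convex_fun p"
  obtains D where "convex D" "D \<subseteq> epi p" "epi p \<subseteq> closure D"
    "\<And>y s t. (y, s) \<in> D \<Longrightarrow> s \<le> t \<Longrightarrow> (y, t) \<in> D"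
proof -
  obtain C where C: "convex C" "C \<subseteq> epi p" "epi p \<subseteq> closure C"
    using assms by (auto simp: nearly_convex_fun_def nearly_convex_def)
  define D where "D = C + {0} \<times> {0..}"
  have memD: "(y, t) \<in> D \<longleftrightarrow> (\<exists>s\<le>t. (y, s) \<in> C)" for y t
  proof
    assume "(y, t) \<in> D"
    then obtain c s where "c \<in> C" "s \<ge> 0" "(y, t) = c + (0, s)"
      unfolding D_def by (auto elim!: set_plus_elim)
    then have "c = (y, t - s)" by (cases c) auto
    with \<open>c \<in> C\<close> \<open>s \<ge> 0\<close> show "\<exists>s\<le>t. (y, s) \<in> C"
      by (intro exI[of _ "t - s"]) auto
  next
    assume "\<exists>s\<le>t. (y, s) \<in> C"
    then obtain s where "s \<le> t" "(y, s) \<in> C" by blast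
    then have "(y, s) + (0, t - s) \<in> D"
      unfolding D_def by (intro set_plus_intro) auto
    then show "(y, t) \<in> D" by simp
  qed
  show ?thesis
  proof
    show "convex D" unfolding D_def
      by (intro convex_set_plus C(1) convex_Times) auto
    show "D \<subseteq> epi p"
    proof safe
      fix y t assume "(y, t) \<in> D"
      then obtain s where "s \<le> t" "(y, s) \<in> C" by (auto simp: memD)
      then have "(y, s) \<in> epi p" using C(2) by blast
      with \<open>s \<le> t\<close> show "(y, t) \<in> epi p"
        by (simp add: epi_def) (meson ereal_less_eq(3) order_trans)
    qed
    have "C \<subseteq> D"
    proof
      fix z assume "z \<in> C"
      then show "z \<in> D" using memD[of "fst z" "snd z"] by auto
    qed
    then show "epi p \<subseteq> closure D" using C(3) closure_mono by blast
  next
    fix y s t assume "(y, s) \<in> D" "s \<le> t"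
    then obtain r where "r \<le> s" "(y, r) \<in> C" by (auto simp: memD)
    with \<open>s \<le> t\<close> show "(y, t) \<in> D" unfolding memD by (blast intro: order_trans)
  qed
qed

lemma edom_marginal: "edom (\<lambda>y. INF x. f (x, y)) = snd ` edom f"
  unfolding edom_def INF_less_iff by force

lemma nearly_convex_fun_marginal:
  fixes f :: "'a::real_normed_vector \<times> 'b::real_normed_vector \<Rightarrow> ereal"
  assumes "nearly_convex_fun f"
  shows "nearly_convex_fun (\<lambda>y. INF x. f (x, y))" (is "nearly_convex_fun ?p")
proof -
  obtain C where C: "convex C" "C \<subseteq> epi f" "epi f \<subseteq> closure C"
    using assms by (auto simp: nearly_convex_fun_def nearly_convex_def)
  define \<pi> where "\<pi> = (\<lambda>z :: ('a \<times> 'b) \<times> real. (snd (fst z), snd z))"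
  have "linear \<pi>"
    unfolding \<pi>_def by (auto simp: linear_iff)
  then have "convex (\<pi> ` C)" using C(1) by (rule convex_linear_image)
  moreover have "(y, t) \<in> epi ?p" if "((x, y), t) \<in> C" for x y t
  proof -
    have "f (x, y) \<le> ereal t" using that C(2) by (auto simp: epi_def)
    then show ?thesis unfolding epi_def by (auto intro: INF_lower2)
  qed
  then have "\<pi> ` C \<subseteq> epi ?p" unfolding \<pi>_def by force
  moreover have "(y, t) \<in> closure (\<pi> ` C)" if "(y, t) \<in> epi ?p" for y t
  proof -
    have "\<pi> ` closure C \<subseteq> closure (\<pi> ` C)"
      unfolding \<pi>_def by (intro image_closure_subset closure_subset closed_closure continuous_intros)
    then have above: "(y, s) \<in> closure (\<pi> ` C)" if "s > t" for s
    proof -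
      have "?p y < ereal s" using \<open>(y, t) \<in> epi ?p\<close> \<open>s > t\<close>
        by (auto simp: epi_def intro: le_less_trans)
      then obtain x where "f (x, y) < ereal s" by (auto simp: INF_less_iff)
      then have "((x, y), s) \<in> closure C" using C(3) by (auto simp: epi_def)
      then show ?thesis using \<open>\<pi> ` closure C \<subseteq> _\<close> unfolding \<pi>_def by force
    qed
    have "(y, t) \<in> closure (closure (\<pi> ` C))"
      unfolding closure_approachable[of _ "closure _"]
    proof (intro allI impI)
      fix e :: real assume "e > 0"
      then have "dist (y, t + e / 2) (y, t) < e" by (simp add: dist_Pair_Pair dist_real_def)
      with above[of "t + e / 2"] \<open>e > 0\<close> show "\<exists>z\<in>closure (\<pi> ` C). dist z (y, t) < e"
        by auto
    qed
    then show ?thesis by simp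
  qed
  then have "epi ?p \<subseteq> closure (\<pi> ` C)" by auto
  ultimately show ?thesis
    unfolding nearly_convex_fun_def nearly_convex_def by blast
qed

lemma mem_edom_iff_epi: "y \<in> edom p \<longleftrightarrow> (\<exists>t. (y, t) \<in> epi p)"
proof -
  have "p y < \<infinity> \<longleftrightarrow> (\<exists>t. p y \<le> ereal t)"
    by (cases "p y") auto
  then show ?thesis by (simp add: edom_def epi_def)
qed

lemma graph_not_in_rel_interior_upclosed:
  fixes D :: "('a::real_normed_vector \<times> real) set"
  assumes "D \<subseteq> epi p" "\<And>y s t. (y, s) \<in> D \<Longrightarrow> s \<le> t \<Longrightarrow> (y, t) \<in> D" "p a = ereal v"
  shows "(a, v) \<notin> rel_interior D"
proof
  assume inD: "(a, v) \<in> rel_interior D"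
  then have "(a, v) \<in> D" using rel_interior_subset by blast
  then have "(a, v + 1) \<in> D" using assms(2) by simp
  then obtain e where "e > 0" "(a, v) + e *\<^sub>R ((a, v) - (a, v + 1)) \<in> D"
    using rel_interior_extend_beyond[OF inD hull_inc] by blast
  then have "(a, v - e) \<in> epi p" using assms(1) by auto
  with \<open>e > 0\<close> assms(3) show False by (simp add: epi_def)
qed

lemma affine_minorant_of_supporting_hyperplane:
  assumes "c > 0" "\<And>y t. (y, t) \<in> epi p \<Longrightarrow> b \<bullet> a + c * v \<le> b \<bullet> y + c * t"
  shows "ereal (v + (- (1 / c) *\<^sub>R b) \<bullet> (y - a)) \<le> p y"
proof (rule ereal_le_real)
  fix t assume "p y \<le> ereal t"
  then have "b \<bullet> a + c * v \<le> b \<bullet> y + c * t" by (intro assms(2)) (simp add: epi_def)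
  then show "ereal (v + (- (1 / c) *\<^sub>R b) \<bullet> (y - a)) \<le> ereal t"
    using \<open>c > 0\<close> by (simp add: inner_simps field_simps)
qed

lemma nearly_convex_fun_subgradient:
  fixes p :: "'a::euclidean_space \<Rightarrow> ereal"
  assumes "nearly_convex_fun p" "a \<in> rel_interior (edom p)" "p a = ereal v"
  obtains g where "\<And>y. ereal (v + g \<bullet> (y - a)) \<le> p y"
proof -
  obtain D where D: "convex D" "D \<subseteq> epi p" "epi p \<subseteq> closure D"
    and upD: "\<And>y s t. (y, s) \<in> D \<Longrightarrow> s \<le> t \<Longrightarrow> (y, t) \<in> D"
    by (rule nearly_convex_funE_upclosed[OF assms(1)]) blast
  have epi_a: "(a, t) \<in> epi p \<longleftrightarrow> v \<le> t" for t
    using assms(3) by (simp add: epi_def)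
  have "(a, v) \<notin> rel_interior D"
    using graph_not_in_rel_interior_upclosed[OF D(2) upD assms(3)] .
  moreover have "(a, v) \<in> closure D" using D(3) epi_a by blast
  ultimately obtain n where n_le: "\<And>z. z \<in> closure D \<Longrightarrow> n \<bullet> (a, v) \<le> n \<bullet> z"
    and n_less: "\<And>z. z \<in> rel_interior D \<Longrightarrow> n \<bullet> (a, v) < n \<bullet> z"
    using supporting_hyperplane_relative_frontier[OF D(1)] by blast
  obtain b c where n: "n = (b, c)" by fastforce
  have supp: "b \<bullet> a + c * v \<le> b \<bullet> y + c * t" if "(y, t) \<in> epi p" for y t
    using n_le[of "(y, t)"] that D(3) n by (auto simp: inner_Pair)
  have "c \<ge> 0" using supp[of a "v + 1"] by (simp add: epi_a distrib_left)
  moreover have "c \<noteq> 0"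
  proof
    \<comment> \<open>A vertical hyperplane would be constant on \<open>edom p\<close> (since \<open>a\<close> is relatively interior
      there), contradicting strict separation on \<open>rel_interior D\<close>.\<close>
    assume "c = 0"
    have "D \<noteq> {}" using \<open>(a, v) \<in> closure D\<close> by auto
    then obtain y t where yt: "(y, t) \<in> rel_interior D"
      using rel_interior_eq_empty[OF D(1)] by fastforce
    then have "(y, t) \<in> epi p" using D(2) rel_interior_subset by blast
    then have "y \<in> edom p" by (auto simp: mem_edom_iff_epi)
    then obtain e where "e > 0" "a + e *\<^sub>R (a - y) \<in> edom p"
      using rel_interior_extend_beyond[OF assms(2) hull_inc] by blast
    then have "b \<bullet> a \<le> b \<bullet> (a + e *\<^sub>R (a - y))"
      using supp \<open>c = 0\<close> by (auto simp: mem_edom_iff_epi)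
    moreover have "b \<bullet> a < b \<bullet> y"
      using n_less[OF yt] n \<open>c = 0\<close> by (simp add: inner_Pair)
    ultimately show False
      using \<open>e > 0\<close> by (simp add: inner_simps algebra_simps mult_less_cancel_left_pos)
  qed
  ultimately have "c > 0" by simp
  show ?thesis
    using affine_minorant_of_supporting_hyperplane[OF \<open>c > 0\<close> supp] by (rule that)
qed

lemma fconj_le_of_affine_minorant:
  fixes f :: "(real^'n) \<times> (real^'p) \<Rightarrow> ereal"
  assumes "\<And>x y. ereal (c + u \<bullet> x + w \<bullet> y) \<le> f (x, y)"
  shows "fconj f (u, w) \<le> - ereal c"
  unfolding fconj_def
proof (simp only: case_prod_conv, rule SUP_least, clarify)
  fix x y
  show "ereal (u \<bullet> x + w \<bullet> y) - f (x, y) \<le> - ereal c"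
    using assms[of x y] by (cases "f (x, y)") auto
qed

theorem corollary7p2:
  fixes f :: "(real^'n) \<times> (real^'p) \<Rightarrow> ereal"
  assumes "proper_fun f"
    and "nearly_convex_fun f"
    and "0 \<in> ri (snd ` edom f)"
  shows "(INF x. f (x, 0)) = (SUP y. - fconj f (0, y))"
proof -
  define p where "p y = (INF x. f (x, y))" for y
  have ncp: "nearly_convex_fun p" and dom: "0 \<in> rel_interior (edom p)"
    using nearly_convex_fun_marginal[OF assms(2)] assms(3)
    by (simp_all add: p_def[abs_def] edom_marginal ri_eq_rel_interior)
  have "p 0 \<le> (SUP y. - fconj f (0, y))"
  proof (cases "p 0")
    case (real v)
    then obtain g where g: "\<And>y. ereal (v + g \<bullet> (y - 0)) \<le> p y"
      using nearly_convex_fun_subgradient[OF ncp dom] by blast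
    have "ereal (v + 0 \<bullet> x + g \<bullet> y) \<le> f (x, y)" for x y
    proof -
      have "p y \<le> f (x, y)" unfolding p_def by (rule INF_lower) simp
      with g[of y] show ?thesis by simp
    qed
    then have "fconj f (0, g) \<le> - ereal v" by (rule fconj_le_of_affine_minorant)
    then have "ereal v \<le> - fconj f (0, g)" by (metis ereal_minus_le_minus ereal_uminus_uminus)
    also have "\<dots> \<le> (SUP y. - fconj f (0, y))" by (rule SUP_upper) simp
    finally show ?thesis using real by simp
  next
    case PInf
    moreover have "0 \<in> edom p" using dom rel_interior_subset by blast
    ultimately show ?thesis by (simp add: edom_def)
  qed simp
  then show ?thesis
    using fconj_weak_duality[of f] unfolding p_def by (rule antisym)
qed

end
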